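(* Let $W$ be a positive word. Let $S$ be a word in the letters $\sigma_1,\dots,\sigma_{n-1}$ only, of maximal length among such words for which $W\doteq ST$ for some positive word $T$. Suppose also that $W\doteq AV$ where $A$ is a word in the letters $\sigma_1,\dots,\sigma_{n-1}$ only and $V$ is a positive word. Then $S$ is left divisible by $A$, i.e. $S\doteq AU$ for some positive word $U$. Analogously for right division: if $S$ is a word in the $\sigma_i$ of maximal length with $W\doteq TS$ for some positive $T$, and $W\doteq VA$ with $A$ a word in the $\sigma_i$ and $V$ positive, then $S\doteq UA$ for some positive word $U$.
   Context: Fix $n\ge 2$. The positive singular braid monoid $SB_n^+$ is the monoid with generators $\sigma_1,\dots,\sigma_{n-1},x_1,\dots,x_{n-1}$ and relations: $\sigma_i\sigma_j=\sigma_j\sigma_i$ and $x_ix_j=x_jx_i$ if $|i-j|>1$; $x_i\sigma_j=\sigma_jx_i$ if $|i-j|\ne 1$; $\sigma_i\sigma_{i+1}\sigma_i=\sigma_{i+1}\sigma_i\sigma_{i+1}$; $\sigma_i\sigma_{i+1}x_i=x_{i+1}\sigma_i\sigma_{i+1}$; $\sigma_{i+1}\sigma_ix_{i+1}=x_i\sigma_{i+1}\sigma_i$. A positive word is a word in the letters $\sigma_i,x_i$. For positive words, $A\doteq B$ means they represent the same element of $SB_n^+$. *)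

theory Defs
  imports Main
begin

text \<open>Letters of the positive singular braid monoid: Sig i is sigma_i, X i is x_i
  (indices 1..n-1). Positive words are lists of letters.\<close>

datatype letter = Sig nat | X nat

type_synonym word = "letter list"

fun idx :: "letter \<Rightarrow> nat" where
  "idx (Sig i) = i" | "idx (X i) = i"

fun is_sig :: "letter \<Rightarrow> bool" where
  "is_sig (Sig i) = True" | "is_sig (X i) = False"

definition pos_word :: "nat \<Rightarrow> word \<Rightarrow> bool" where
  "pos_word n w \<longleftrightarrow> (\<forall>a\<in>set w. 1 \<le> idx a \<and> idx a \<le> n - 1)"

definition sigma_word :: "nat \<Rightarrow> word \<Rightarrow> bool" where
  "sigma_word n w \<longleftrightarrow> pos_word n w \<and> (\<forall>a\<in>set w. is_sig a)"

definition in_rng :: "nat \<Rightarrow> nat \<Rightarrow> bool" where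
  "in_rng n i \<longleftrightarrow> 1 \<le> i \<and> i \<le> n - 1"

inductive sb_rel :: "nat \<Rightarrow> word \<Rightarrow> word \<Rightarrow> bool" for n where
  ss: "\<lbrakk>in_rng n i; in_rng n j; i + 1 < j \<or> j + 1 < i\<rbrakk> \<Longrightarrow> sb_rel n [Sig i, Sig j] [Sig j, Sig i]"
| xx: "\<lbrakk>in_rng n i; in_rng n j; i + 1 < j \<or> j + 1 < i\<rbrakk> \<Longrightarrow> sb_rel n [X i, X j] [X j, X i]"
| xs: "\<lbrakk>in_rng n i; in_rng n j; i \<noteq> j + 1; j \<noteq> i + 1\<rbrakk> \<Longrightarrow> sb_rel n [X i, Sig j] [Sig j, X i]"
| braid: "\<lbrakk>in_rng n i; in_rng n (i+1)\<rbrakk> \<Longrightarrow> sb_rel n [Sig i, Sig (i+1), Sig i] [Sig (i+1), Sig i, Sig (i+1)]"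
| mix1: "\<lbrakk>in_rng n i; in_rng n (i+1)\<rbrakk> \<Longrightarrow> sb_rel n [Sig i, Sig (i+1), X i] [X (i+1), Sig i, Sig (i+1)]"
| mix2: "\<lbrakk>in_rng n i; in_rng n (i+1)\<rbrakk> \<Longrightarrow> sb_rel n [Sig (i+1), Sig i, X (i+1)] [X i, Sig (i+1), Sig i]"

inductive sb_eq :: "nat \<Rightarrow> word \<Rightarrow> word \<Rightarrow> bool" for n where
  step: "sb_rel n l r \<Longrightarrow> sb_eq n (u @ l @ v) (u @ r @ v)"
| refl: "sb_eq n w w"
| sym: "sb_eq n a b \<Longrightarrow> sb_eq n b a"
| trans: "sb_eq n a b \<Longrightarrow> sb_eq n b c \<Longrightarrow> sb_eq n a c"

end

theory Submission
  imports Defs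
begin

text \<open>
  The defining relations of SB_n^+ form a complemented presentation: for distinct letters a and b
  there is at most one relation a p = b q. Dehornoy's cube condition for such presentations only
  depends on the relative position of the indices of three letters, so it can be checked by
  symbolic evaluation; it implies that a U = b V with a, b distinct forces U = p Z and V = q Z for
  some Z. Hence SB_n^+ is left cancellative and a p is the least common right multiple of a and b;
  for two letters sigma_i, sigma_j the words p and q are again sigma words.

  Let S be a longest sigma prefix of W = S T and let W = a A' V. If S = a S', cancel a and use
  induction on the length of W. If S = s S' with s distinct from a, then S' T = q Z, so by
  induction S' = q U and S = s q U = a p U. Now p U is a longest sigma prefix of the word
  obtained from W by cancelling a, and this word equals A' V, so a second use of the induction
  hypothesis divides p U by A'. The right-hand version follows by reversing all words, since the
  set of relations is closed under reversal.
\<close>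

section \<open>The complemented presentation\<close>

text \<open>\<open>complement a b = Some (p, q)\<close> encodes the defining relation a p = b q; indices are not
  restricted to 1..n-1 here.\<close>
fun complement :: "letter \<Rightarrow> letter \<Rightarrow> (word \<times> word) option" where
  "complement (Sig i) (Sig j) =
     (if i = j then None
      else if j = i + 1 \<or> i = j + 1 then Some ([Sig j, Sig i], [Sig i, Sig j])
      else Some ([Sig j], [Sig i]))"
| "complement (X i) (X j) =
     (if i = j \<or> j = i + 1 \<or> i = j + 1 then None else Some ([X j], [X i]))"
| "complement (X i) (Sig j) =
     (if j = i + 1 \<or> i = j + 1 then Some ([Sig j, Sig i], [Sig i, X j])
      else Some ([Sig j], [X i]))"
| "complement (Sig j) (X i) =
     (if j = i + 1 \<or> i = j + 1 then Some ([Sig i, X j], [Sig j, Sig i])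
      else Some ([X i], [Sig j]))"

definition all_sig :: "word \<Rightarrow> bool" where
  "all_sig w \<longleftrightarrow> (\<forall>x\<in>set w. is_sig x)"

lemma all_sig_simps [simp]:
  "all_sig []" "all_sig (a # w) \<longleftrightarrow> is_sig a \<and> all_sig w"
  "all_sig (u @ v) \<longleftrightarrow> all_sig u \<and> all_sig v" "all_sig (rev w) \<longleftrightarrow> all_sig w"
  by (auto simp: all_sig_def)

lemma complement_self [simp]: "complement a a = None"
  by (cases a) auto

lemma complement_swap: "complement a b = Some (p, q) \<Longrightarrow> complement b a = Some (q, p)"
  by (cases a; cases b) (auto split: if_splits)

lemma complement_all_sig:
  "complement a b = Some (p, q) \<Longrightarrow> is_sig a \<Longrightarrow> is_sig b \<Longrightarrow> all_sig p \<and> all_sig q"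
  by (cases a; cases b) (auto split: if_splits)

definition defining_relation :: "word \<Rightarrow> word \<Rightarrow> bool" where
  "defining_relation l r \<longleftrightarrow> (\<exists>a b p q. complement a b = Some (p, q) \<and> l = a # p \<and> r = b # q)"

lemma defining_relation_sym: "defining_relation l r \<Longrightarrow> defining_relation r l"
  unfolding defining_relation_def using complement_swap by blast

lemma defining_relation_invariants:
  assumes "defining_relation l r"
  shows "length l = length r \<and> idx ` set l = idx ` set r \<and> all_sig l = all_sig r"
proof -
  obtain a b p q where "complement a b = Some (p, q)" "l = a # p" "r = b # q"
    using assms unfolding defining_relation_def by blast
  then show ?thesis by (cases a; cases b) (auto split: if_splits)
qed

lemma defining_relation_rev:
  assumes "defining_relation l r"
  shows "defining_relation (rev l) (rev r)"
proof -
  obtain a b p q where "complement a b = Some (p, q)" "l = a # p" "r = b # q"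
    using assms unfolding defining_relation_def by blast
  then show ?thesis unfolding defining_relation_def by (cases a; cases b) (auto split: if_splits)
qed

definition rewrite_step :: "word \<Rightarrow> word \<Rightarrow> bool" where
  "rewrite_step u v \<longleftrightarrow> (\<exists>x y l r. u = x @ l @ y \<and> v = x @ r @ y \<and> defining_relation l r)"

abbreviation word_equiv :: "word \<Rightarrow> word \<Rightarrow> bool" (infix "\<approx>" 50) where
  "u \<approx> v \<equiv> rewrite_step\<^sup>*\<^sup>* u v"

lemma rewrite_step_sym: "rewrite_step u v \<Longrightarrow> rewrite_step v u"
  unfolding rewrite_step_def using defining_relation_sym by blast

lemma word_equiv_sym: "u \<approx> v \<Longrightarrow> v \<approx> u"
  by (induction rule: rtranclp_induct)
    (auto intro: converse_rtranclp_into_rtranclp rewrite_step_sym)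

lemma word_equiv_trans: "u \<approx> v \<Longrightarrow> v \<approx> w \<Longrightarrow> u \<approx> w"
  by (rule rtranclp_trans)

lemma word_equiv_invariants:
  "u \<approx> v \<Longrightarrow> length u = length v \<and> idx ` set u = idx ` set v \<and> all_sig u = all_sig v"
proof (induction rule: rtranclp_induct)
  case (step v w)
  then obtain x y l r where "v = x @ l @ y" "w = x @ r @ y" "defining_relation l r"
    unfolding rewrite_step_def by blast
  with step.IH defining_relation_invariants[of l r] show ?case
    by (auto simp: image_Un)
qed simp

lemma word_equiv_length: "u \<approx> v \<Longrightarrow> length u = length v"
  using word_equiv_invariants by blast

lemma word_equiv_all_sig: "u \<approx> v \<Longrightarrow> all_sig u = all_sig v"
  using word_equiv_invariants by blast

lemma word_equiv_pos_word: "u \<approx> v \<Longrightarrow> pos_word n u \<Longrightarrow> pos_word n v"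
  using word_equiv_invariants[of u v] unfolding pos_word_def by (metis imageE imageI)

lemma rewrite_step_append: "rewrite_step u v \<Longrightarrow> rewrite_step (x @ u @ y) (x @ v @ y)"
proof -
  assume "rewrite_step u v"
  then obtain x' y' l r where "u = x' @ l @ y'" "v = x' @ r @ y'" "defining_relation l r"
    unfolding rewrite_step_def by blast
  then show ?thesis
    unfolding rewrite_step_def by (intro exI[of _ "x @ x'"] exI[of _ "y' @ y"] exI[of _ l] exI[of _ r]) simp
qed

lemma word_equiv_append: "u \<approx> v \<Longrightarrow> x @ u @ y \<approx> x @ v @ y"
  by (induction rule: rtranclp_induct) (auto intro: rtranclp.rtrancl_into_rtrancl rewrite_step_append)

lemma word_equiv_Cons: "u \<approx> v \<Longrightarrow> a # u \<approx> a # v"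
  using word_equiv_append[of u v "[a]" "[]"] by simp

lemma word_equiv_append_left: "u \<approx> v \<Longrightarrow> x @ u \<approx> x @ v"
  using word_equiv_append[of u v x "[]"] by simp

lemma word_equiv_append_right: "u \<approx> v \<Longrightarrow> u @ y \<approx> v @ y"
  using word_equiv_append[of u v "[]" y] by simp

lemma word_equiv_complement: "complement a b = Some (p, q) \<Longrightarrow> a # p @ y \<approx> b # q @ y"
proof -
  assume "complement a b = Some (p, q)"
  then have "rewrite_step ([] @ (a # p) @ y) ([] @ (b # q) @ y)"
    unfolding rewrite_step_def defining_relation_def by blast
  then show ?thesis by simp
qed

lemma rewrite_step_rev: "rewrite_step u v \<Longrightarrow> rewrite_step (rev u) (rev v)"
proof -
  assume "rewrite_step u v"
  then obtain x y l r where "u = x @ l @ y" "v = x @ r @ y" "defining_relation l r"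
    unfolding rewrite_step_def by blast
  then show ?thesis
    unfolding rewrite_step_def using defining_relation_rev
    by (intro exI[of _ "rev y"] exI[of _ "rev x"] exI[of _ "rev l"] exI[of _ "rev r"]) simp
qed

lemma word_equiv_rev: "u \<approx> v \<Longrightarrow> rev u \<approx> rev v"
  by (induction rule: rtranclp_induct) (auto intro: rtranclp.rtrancl_into_rtrancl rewrite_step_rev)

lemma sb_rel_defining_relation: "sb_rel n l r \<Longrightarrow> defining_relation l r"
  unfolding defining_relation_def by (induction rule: sb_rel.induct) auto

lemma sb_eq_imp_word_equiv: "sb_eq n u v \<Longrightarrow> u \<approx> v"
proof (induction rule: sb_eq.induct)
  case (step l r u v)
  then have "rewrite_step (u @ l @ v) (u @ r @ v)"
    unfolding rewrite_step_def using sb_rel_defining_relation by blast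
  then show ?case by (rule r_into_rtranclp)
qed (auto intro: word_equiv_sym word_equiv_trans)

lemma complement_sb_rel:
  assumes "complement a b = Some (p, q)" and "\<forall>x\<in>set (a # p). in_rng n (idx x)"
  shows "sb_rel n (a # p) (b # q) \<or> sb_rel n (b # q) (a # p)"
proof -
  have distant: "i + 1 < j \<or> j + 1 < i"
    if "i \<noteq> j" "j \<noteq> i + 1" "i \<noteq> j + 1" for i j :: nat
    using that by arith
  show ?thesis
  proof (cases a; cases b)
    fix i j assume "a = Sig i" "b = Sig j"
    with assms show ?thesis
      using sb_rel.ss[of n i j] sb_rel.braid[of n i] sb_rel.braid[of n j] distant[of i j]
      by (auto split: if_splits)
  next
    fix i j assume "a = X i" "b = X j"
    with assms show ?thesis
      using sb_rel.xx[of n i j] distant[of i j] by (auto split: if_splits)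
  next
    fix i j assume "a = X i" "b = Sig j"
    with assms show ?thesis
      using sb_rel.xs[of n i j] sb_rel.mix1[of n j] sb_rel.mix2[of n i] by (auto split: if_splits)
  next
    fix i j assume "a = Sig i" "b = X j"
    with assms show ?thesis
      using sb_rel.xs[of n j i] sb_rel.mix1[of n i] sb_rel.mix2[of n j] by (auto split: if_splits)
  qed
qed

lemma word_equiv_imp_sb_eq: "u \<approx> v \<Longrightarrow> pos_word n u \<Longrightarrow> sb_eq n u v"
proof (induction rule: rtranclp_induct)
  case base
  then show ?case by (simp add: sb_eq.refl)
next
  case (step v w)
  from step.hyps(2) obtain x y a b p q where c: "complement a b = Some (p, q)"
    and v: "v = x @ (a # p) @ y" and w: "w = x @ (b # q) @ y"
    unfolding rewrite_step_def defining_relation_def by blast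
  have "pos_word n v" using step word_equiv_pos_word by blast
  then have "\<forall>z\<in>set (a # p). in_rng n (idx z)"
    unfolding v pos_word_def in_rng_def by auto
  then have "sb_eq n v w"
    using complement_sb_rel[OF c] unfolding v w by (metis sb_eq.step sb_eq.sym)
  with step show ?case by (metis sb_eq.trans)
qed

lemma sb_eq_iff_word_equiv: "pos_word n u \<Longrightarrow> sb_eq n u v \<longleftrightarrow> u \<approx> v"
  using sb_eq_imp_word_equiv word_equiv_imp_sb_eq by blast

lemma pos_word_append [simp]: "pos_word n (u @ v) \<longleftrightarrow> pos_word n u \<and> pos_word n v"
  unfolding pos_word_def by auto

lemma pos_word_rev [simp]: "pos_word n (rev u) \<longleftrightarrow> pos_word n u"
  unfolding pos_word_def by auto

lemma sigma_word_iff: "sigma_word n w \<longleftrightarrow> pos_word n w \<and> all_sig w"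
  unfolding sigma_word_def all_sig_def by simp

lemma sb_eq_rev: "pos_word n u \<Longrightarrow> sb_eq n u v \<Longrightarrow> sb_eq n (rev u) (rev v)"
  using word_equiv_rev by (simp add: sb_eq_iff_word_equiv)

section \<open>Word reversing and the cube condition\<close>

datatype reversal = Reversed "word \<times> word" | Reversal_fails | Out_of_fuel

text \<open>Right reversing of the signed word P\<inverse> Q into R1 R2\<inverse>, with a step bound
  that makes it total.\<close>
fun right_reverse :: "nat \<Rightarrow> word \<Rightarrow> word \<Rightarrow> reversal" where
  "right_reverse 0 P Q = Out_of_fuel"
| "right_reverse (Suc k) [] Q = Reversed (Q, [])"
| "right_reverse (Suc k) (a # P) [] = Reversed ([], a # P)"
| "right_reverse (Suc k) (a # P) (b # Q) =
     (if a = b then right_reverse k P Q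
      else case complement a b of
        None \<Rightarrow> Reversal_fails
      | Some (p, q) \<Rightarrow>
          (case right_reverse k P p of
            Reversed (P1, p1) \<Rightarrow>
              (case right_reverse k Q (q @ p1) of
                Reversed (Q1, R) \<Rightarrow> Reversed (P1 @ R, Q1)
              | r \<Rightarrow> r)
          | r \<Rightarrow> r))"

lemma right_reverse_sound: "right_reverse k P Q = Reversed (R1, R2) \<Longrightarrow> P @ R1 \<approx> Q @ R2"
proof (induction k P Q arbitrary: R1 R2 rule: right_reverse.induct)
  case (4 k a P b Q)
  show ?case
  proof (cases "a = b")
    case True
    with 4 show ?thesis by (auto intro: word_equiv_Cons)
  next
    case False
    with "4.prems" obtain p q where c: "complement a b = Some (p, q)"
      by (cases "complement a b") auto
    with False "4.prems" obtain P1 p1 Q1 R where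
      r1: "right_reverse k P p = Reversed (P1, p1)" and
      r2: "right_reverse k Q (q @ p1) = Reversed (Q1, R)" and
      res: "R1 = P1 @ R" "R2 = Q1"
      by (auto split: reversal.splits)
    have "a # P @ P1 @ R \<approx> a # p @ p1 @ R"
      using word_equiv_Cons[OF word_equiv_append_right[OF "4.IH"(2)[OF False c HOL.refl r1]]] by simp
    also have "\<dots> \<approx> b # q @ p1 @ R"
      using word_equiv_complement[OF c] by simp
    also have "\<dots> \<approx> b # Q @ Q1"
      using word_equiv_Cons[OF word_equiv_sym[OF "4.IH"(3)[OF False c HOL.refl r1 HOL.refl r2]]] by simp
    finally show ?thesis using res by simp
  qed
qed auto

lemma right_reverse_self: "right_reverse (Suc (length P)) P P = Reversed ([], [])"
  by (induction P) auto

text \<open>Dehornoy's cube condition for the letters a, b, c, made decidable by a step bound: the common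
  multiple a p1 Q' = b q2 P' obtained by reversing q1\<inverse> p2 must be a right multiple of
  a p3 = b q3. If that reversing fails there is nothing to check, as \<open>right_reverse_complete\<close>
  shows that it then cannot come from an actual common multiple.\<close>
definition cube_condition :: "letter \<Rightarrow> letter \<Rightarrow> letter \<Rightarrow> bool" where
  "cube_condition a b c \<longleftrightarrow>
     (case complement a c of None \<Rightarrow> True | Some (p1, q1) \<Rightarrow>
     (case complement c b of None \<Rightarrow> True | Some (p2, q2) \<Rightarrow>
     (case right_reverse 20 q1 p2 of
       Reversal_fails \<Rightarrow> True
     | Out_of_fuel \<Rightarrow> False
     | Reversed (Q', P') \<Rightarrow>
         (case complement a b of
           None \<Rightarrow> False
         | Some (p3, q3) \<Rightarrow>
             (case (right_reverse 20 p3 (p1 @ Q'), right_reverse 20 q3 (q2 @ P')) of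
               (Reversed (R, []), Reversed (R', [])) \<Rightarrow> right_reverse 20 R R' = Reversed ([], [])
             | _ \<Rightarrow> False)))))"

lemma cube_condition_common_multiple:
  assumes cube: "cube_condition a b c" and c1: "complement a c = Some (p1, q1)"
    and c2: "complement c b = Some (p2, q2)" and "right_reverse 20 q1 p2 \<noteq> Reversal_fails"
  obtains Q' P' p3 q3 R where "right_reverse 20 q1 p2 = Reversed (Q', P')"
    and "complement a b = Some (p3, q3)" and "p1 @ Q' \<approx> p3 @ R" and "q2 @ P' \<approx> q3 @ R"
proof -
  obtain Q' P' where r: "right_reverse 20 q1 p2 = Reversed (Q', P')"
    using assms unfolding cube_condition_def by (auto split: reversal.splits)
  obtain p3 q3 where c3: "complement a b = Some (p3, q3)"
    using cube c1 c2 r unfolding cube_condition_def by (auto split: option.splits)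
  have "case (right_reverse 20 p3 (p1 @ Q'), right_reverse 20 q3 (q2 @ P')) of
      (Reversed (R, []), Reversed (R', [])) \<Rightarrow> right_reverse 20 R R' = Reversed ([], [])
    | _ \<Rightarrow> False"
    using cube c1 c2 r c3 unfolding cube_condition_def by simp
  then obtain R R' where r1: "right_reverse 20 p3 (p1 @ Q') = Reversed (R, [])"
    and r2: "right_reverse 20 q3 (q2 @ P') = Reversed (R', [])"
    and r3: "right_reverse 20 R R' = Reversed ([], [])"
    by (auto split: prod.splits reversal.splits list.splits)
  have "p1 @ Q' \<approx> p3 @ R"
    using word_equiv_sym[OF right_reverse_sound[OF r1]] by simp
  moreover have "q2 @ P' \<approx> q3 @ R"
  proof -
    have "q2 @ P' \<approx> q3 @ R'"
      using word_equiv_sym[OF right_reverse_sound[OF r2]] by simp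
    also have "\<dots> \<approx> q3 @ R"
      using word_equiv_append_left[OF word_equiv_sym[OF right_reverse_sound[OF r3]]] by simp
    finally show ?thesis .
  qed
  ultimately show ?thesis using that r c3 by blast
qed

definition cube_condition_at :: "nat \<Rightarrow> nat \<Rightarrow> nat \<Rightarrow> bool" where
  "cube_condition_at i j k \<longleftrightarrow>
     (\<forall>a b c. a \<in> {Sig i, X i} \<longrightarrow> b \<in> {Sig j, X j} \<longrightarrow> c \<in> {Sig k, X k} \<longrightarrow>
        a \<noteq> b \<longrightarrow> a \<noteq> c \<longrightarrow> b \<noteq> c \<longrightarrow> cube_condition a b c)"

text \<open>Two indices are equal, adjacent or distant, and the complement only depends on which;
  so the gaps 0, 1 and m + 2 between sorted indices cover all cases, and the check runs
  symbolically in p, m1 and m2.\<close>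
lemma cube_condition_at_gaps:
  assumes "d1 = 0 \<or> d1 = 1 \<or> d1 = m1 + 2" and "d2 = 0 \<or> d2 = 1 \<or> d2 = m2 + 2"
  shows "cube_condition_at p (p + d1) (p + d1 + d2) \<and> cube_condition_at p (p + d1 + d2) (p + d1) \<and>
    cube_condition_at (p + d1) p (p + d1 + d2) \<and> cube_condition_at (p + d1) (p + d1 + d2) p \<and>
    cube_condition_at (p + d1 + d2) p (p + d1) \<and> cube_condition_at (p + d1 + d2) (p + d1) p"
  using assms unfolding cube_condition_at_def cube_condition_def
  by (elim disjE; hypsubst; intro conjI allI impI; elim insertE emptyE; simp add: numeral_eq_Suc)

lemma cube_condition_at_all: "cube_condition_at i j k"
proof -
  have gap: "x \<le> y \<Longrightarrow> \<exists>d m. y = x + d \<and> (d = 0 \<or> d = 1 \<or> d = m + 2)" for x y :: nat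
    by (rule exI[of _ "y - x"], rule exI[of _ "y - x - 2"]) auto
  have sorted: "cube_condition_at p q r \<and> cube_condition_at p r q \<and> cube_condition_at q p r \<and>
    cube_condition_at q r p \<and> cube_condition_at r p q \<and> cube_condition_at r q p"
    if "p \<le> q" "q \<le> r" for p q r
    using gap[OF that(1)] gap[OF that(2)] cube_condition_at_gaps[of _ _ _ _ p] by force
  show ?thesis
    by (metis sorted nat_le_linear)
qed

lemma cube_condition_letters:
  assumes "a \<noteq> b" "a \<noteq> c" "b \<noteq> c"
  shows "cube_condition a b c"
proof -
  have "x \<in> {Sig (idx x), X (idx x)}" for x by (cases x) auto
  with assms show ?thesis
    using cube_condition_at_all[of "idx a" "idx b" "idx c"] unfolding cube_condition_at_def by blast
qed

section \<open>Left cancellativity and least common multiples of letters\<close>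

definition factors_through_complement :: "letter \<Rightarrow> word \<Rightarrow> letter \<Rightarrow> word \<Rightarrow> bool" where
  "factors_through_complement a U b V \<longleftrightarrow>
     (a = b \<and> U \<approx> V) \<or> (\<exists>p q Z. complement a b = Some (p, q) \<and> U \<approx> p @ Z \<and> V \<approx> q @ Z)"

lemma factors_through_complement_same: "factors_through_complement a U a V \<longleftrightarrow> U \<approx> V"
  unfolding factors_through_complement_def by simp

lemma factors_through_complement_distinct:
  "a \<noteq> b \<Longrightarrow> factors_through_complement a U b V \<longleftrightarrow>
     (\<exists>p q Z. complement a b = Some (p, q) \<and> U \<approx> p @ Z \<and> V \<approx> q @ Z)"
  unfolding factors_through_complement_def by simp

lemma factors_through_complement_equiv:
  assumes "factors_through_complement a U b V" and U: "U \<approx> U'" and V: "V \<approx> V'"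
  shows "factors_through_complement a U' b V'"
proof -
  from assms(1) consider "a = b" "U \<approx> V"
    | p q Z where "complement a b = Some (p, q)" "U \<approx> p @ Z" "V \<approx> q @ Z"
    unfolding factors_through_complement_def by blast
  then show ?thesis
  proof cases
    case 1
    then show ?thesis
      using word_equiv_trans[OF word_equiv_trans[OF word_equiv_sym[OF U]] V]
      by (simp add: factors_through_complement_same)
  next
    case 2
    then show ?thesis
      unfolding factors_through_complement_def
      using word_equiv_trans[OF word_equiv_sym[OF U]] word_equiv_trans[OF word_equiv_sym[OF V]] by blast
  qed
qed

lemma rewrite_step_Cons_factors_through_complement:
  assumes "rewrite_step (c # W) (b # V)"
  shows "factors_through_complement c W b V"
proof -
  obtain x y l r where e: "c # W = x @ l @ y" "b # V = x @ r @ y" "defining_relation l r"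
    using assms unfolding rewrite_step_def by blast
  show ?thesis
  proof (cases x)
    case Nil
    with e obtain p q where "complement c b = Some (p, q)" "W = p @ y" "V = q @ y"
      unfolding defining_relation_def by auto
    then show ?thesis unfolding factors_through_complement_def by blast
  next
    case (Cons x0 x')
    with e have "c = b" "W = x' @ l @ y" "V = x' @ r @ y" by auto
    with e(3) show ?thesis
      unfolding factors_through_complement_def rewrite_step_def by blast
  qed
qed

text \<open>For r the result of reversing P\<inverse> Q and a common multiple P Z1 = Q Z2, the
  reversing does not fail and, if it terminates, Z1 and Z2 are multiples of its output.\<close>
definition reversal_covers :: "reversal \<Rightarrow> word \<Rightarrow> word \<Rightarrow> bool" where
  "reversal_covers r Z1 Z2 \<longleftrightarrow>
     r \<noteq> Reversal_fails \<and> (\<forall>R1 R2. r = Reversed (R1, R2) \<longrightarrow> (\<exists>Z. Z1 \<approx> R1 @ Z \<and> Z2 \<approx> R2 @ Z))"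

lemma reversal_covers_step:
  assumes "a \<noteq> b" and c: "complement a b = Some (p, q)"
    and first: "reversal_covers (right_reverse k P p) Z1 Y"
    and second: "\<And>P1 p1 Y1. right_reverse k P p = Reversed (P1, p1) \<Longrightarrow> Y \<approx> p1 @ Y1 \<Longrightarrow>
      reversal_covers (right_reverse k Q (q @ p1)) Z2 Y1"
  shows "reversal_covers (right_reverse (Suc k) (a # P) (b # Q)) Z1 Z2"
proof (cases "right_reverse k P p")
  case (Reversed P1p1)
  then obtain P1 p1 where r1: "right_reverse k P p = Reversed (P1, p1)"
    by (cases P1p1) auto
  with first obtain Y1 where Y1: "Z1 \<approx> P1 @ Y1" "Y \<approx> p1 @ Y1"
    unfolding reversal_covers_def by blast
  note covers2 = second[OF r1 Y1(2)]
  show ?thesis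
  proof (cases "right_reverse k Q (q @ p1)")
    case (Reversed Q1R)
    then obtain Q1 R where r2: "right_reverse k Q (q @ p1) = Reversed (Q1, R)"
      by (cases Q1R) auto
    with covers2 obtain Y2 where Y2: "Z2 \<approx> Q1 @ Y2" "Y1 \<approx> R @ Y2"
      unfolding reversal_covers_def by blast
    have "Z1 \<approx> (P1 @ R) @ Y2"
      using word_equiv_trans[OF Y1(1) word_equiv_append_left[OF Y2(2)]] by simp
    with Y2(1) show ?thesis
      using assms(1) c r1 r2 unfolding reversal_covers_def by auto
  qed (use covers2 assms(1) c r1 in \<open>auto simp: reversal_covers_def\<close>)
qed (use first assms(1) c in \<open>auto simp: reversal_covers_def\<close>)

lemma right_reverse_complete:
  assumes shorter: "\<And>a U b V. length U < N \<Longrightarrow> a # U \<approx> b # V \<Longrightarrow> factors_through_complement a U b V"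
  shows "length (P @ Z1) \<le> N \<Longrightarrow> P @ Z1 \<approx> Q @ Z2 \<Longrightarrow> reversal_covers (right_reverse k P Q) Z1 Z2"
proof (induction k P Q arbitrary: Z1 Z2 rule: right_reverse.induct)
  case (1 P Q)
  then show ?case by (simp add: reversal_covers_def)
next
  case (2 k Q)
  then show ?case by (auto simp: reversal_covers_def intro: word_equiv_sym)
next
  case (3 k a P)
  then show ?case by (auto simp: reversal_covers_def intro!: exI[of _ Z1] word_equiv_sym)
next
  case (4 k a P b Q)
  have factors: "factors_through_complement a (P @ Z1) b (Q @ Z2)"
    using shorter "4.prems" by simp
  have len: "length (P @ Z1) \<le> N" using "4.prems"(1) by simp
  show ?case
  proof (cases "a = b")
    case True
    with factors len show ?thesis
      using "4.IH"(1) by (simp add: factors_through_complement_same)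
  next
    case False
    with factors obtain p q Y where c: "complement a b = Some (p, q)"
      and PY: "P @ Z1 \<approx> p @ Y" and QY: "Q @ Z2 \<approx> q @ Y"
      by (auto simp: factors_through_complement_distinct)
    show ?thesis
    proof (rule reversal_covers_step[OF False c])
      show "reversal_covers (right_reverse k P p) Z1 Y"
        using "4.IH"(2)[OF False c HOL.refl len PY] .
      fix P1 p1 Y1
      assume r1: "right_reverse k P p = Reversed (P1, p1)" and "Y \<approx> p1 @ Y1"
      then have "Q @ Z2 \<approx> (q @ p1) @ Y1"
        using word_equiv_trans[OF QY word_equiv_append_left] by simp
      moreover have "length (Q @ Z2) \<le> N"
        using len word_equiv_length[OF "4.prems"(2)] by simp
      ultimately show "reversal_covers (right_reverse k Q (q @ p1)) Z2 Y1"
        using "4.IH"(3)[OF False c HOL.refl r1 HOL.refl] by blast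
    qed
  qed
qed

text \<open>This is where the cube condition enters: it makes \<open>factors_through_complement\<close>
  transitive, which is what the induction along a chain of rewriting steps requires.\<close>
lemma factors_through_complement_trans_distinct:
  assumes shorter: "\<And>a U b V. length U < N \<Longrightarrow> a # U \<approx> b # V \<Longrightarrow> factors_through_complement a U b V"
    and len: "length W \<le> N" and "a \<noteq> c" "c \<noteq> b"
    and ac: "factors_through_complement a U c W" and cb: "factors_through_complement c W b V"
  shows "factors_through_complement a U b V"
proof -
  obtain p1 q1 Z1 p2 q2 Z2 where c1: "complement a c = Some (p1, q1)"
    and U: "U \<approx> p1 @ Z1" and W1: "W \<approx> q1 @ Z1"
    and c2: "complement c b = Some (p2, q2)" and W2: "W \<approx> p2 @ Z2" and V: "V \<approx> q2 @ Z2"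
    using assms(3,4) ac cb by (auto simp: factors_through_complement_distinct)
  have "length (q1 @ Z1) \<le> N" using len word_equiv_length[OF W1] by simp
  then have covers: "reversal_covers (right_reverse k q1 p2) Z1 Z2" for k
    using right_reverse_complete[OF shorter] word_equiv_trans[OF word_equiv_sym[OF W1] W2] by blast
  show ?thesis
  proof (cases "a = b")
    case True
    with c2 complement_swap[OF c1] have "p2 = q1" "q2 = p1" by simp_all
    with covers[of "Suc (length q1)"] obtain Z where "Z1 \<approx> Z" "Z2 \<approx> Z"
      unfolding reversal_covers_def by (auto simp: right_reverse_self)
    then have "U \<approx> p1 @ Z" "V \<approx> p1 @ Z"
      using U V \<open>q2 = p1\<close> word_equiv_trans word_equiv_append_left by blast+
    with True show ?thesis
      using word_equiv_sym word_equiv_trans by (metis factors_through_complement_same)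
  next
    case False
    with assms(3,4) have "cube_condition a b c" by (intro cube_condition_letters) auto
    moreover have "right_reverse 20 q1 p2 \<noteq> Reversal_fails"
      using covers unfolding reversal_covers_def by blast
    ultimately obtain Q' P' p3 q3 R where r: "right_reverse 20 q1 p2 = Reversed (Q', P')"
      and c3: "complement a b = Some (p3, q3)"
      and multiple: "p1 @ Q' \<approx> p3 @ R" "q2 @ P' \<approx> q3 @ R"
      using cube_condition_common_multiple c1 c2 by blast
    obtain Z where Z: "Z1 \<approx> Q' @ Z" "Z2 \<approx> P' @ Z"
      using covers[of 20] r unfolding reversal_covers_def by blast
    have "U \<approx> p1 @ Q' @ Z"
      using word_equiv_trans[OF U word_equiv_append_left[OF Z(1)]] .
    also have "\<dots> \<approx> p3 @ R @ Z"
      using word_equiv_append_right[OF multiple(1)] by simp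
    finally have U': "U \<approx> p3 @ R @ Z" .
    have "V \<approx> q2 @ P' @ Z"
      using word_equiv_trans[OF V word_equiv_append_left[OF Z(2)]] .
    also have "\<dots> \<approx> q3 @ R @ Z"
      using word_equiv_append_right[OF multiple(2)] by simp
    finally have "V \<approx> q3 @ R @ Z" .
    with c3 U' show ?thesis
      unfolding factors_through_complement_def by blast
  qed
qed

lemma factors_through_complement_trans:
  assumes shorter: "\<And>a U b V. length U < N \<Longrightarrow> a # U \<approx> b # V \<Longrightarrow> factors_through_complement a U b V"
    and len: "length W \<le> N"
    and ac: "factors_through_complement a U c W" and cb: "factors_through_complement c W b V"
  shows "factors_through_complement a U b V"
proof -
  consider "a = c" | "c = b" | "a \<noteq> c" "c \<noteq> b" by blast
  then show ?thesis
  proof cases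
    case 1
    with ac have "U \<approx> W" by (simp add: factors_through_complement_same)
    with cb 1 show ?thesis
      using factors_through_complement_equiv word_equiv_sym by blast
  next
    case 2
    with cb have "W \<approx> V" by (simp add: factors_through_complement_same)
    with ac 2 show ?thesis
      using factors_through_complement_equiv by blast
  next
    case 3
    show ?thesis by (rule factors_through_complement_trans_distinct[OF shorter len 3 ac cb])
  qed
qed

lemma word_equiv_Cons_factors_through_complement:
  "a # U \<approx> b # V \<Longrightarrow> factors_through_complement a U b V"
proof (induction "length U" arbitrary: a U b V rule: less_induct)
  case less
  have "a # U \<approx> w \<Longrightarrow> w = b # V \<Longrightarrow> factors_through_complement a U b V" for w b V
  proof (induction arbitrary: b V rule: rtranclp_induct)
    case base
    then show ?case by (simp add: factors_through_complement_same)
  next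
    case (step w w')
    then obtain c W where w: "w = c # W"
      using word_equiv_length[OF step(1)] by (cases w) auto
    show ?case
    proof (rule factors_through_complement_trans)
      show "factors_through_complement a U c W" using step.IH w by blast
      show "factors_through_complement c W b V"
        using rewrite_step_Cons_factors_through_complement step(2) w step.prems by blast
      show "length W \<le> length U" using word_equiv_length[OF step(1)] w by simp
    qed (use less.hyps in blast)
  qed
  with less.prems show ?case by blast
qed

lemma word_equiv_Cons_cancel: "a # U \<approx> a # V \<Longrightarrow> U \<approx> V"
  using word_equiv_Cons_factors_through_complement factors_through_complement_same by blast

section \<open>Longest sigma prefixes\<close>

definition max_sigma_prefix :: "word \<Rightarrow> word \<Rightarrow> bool" where
  "max_sigma_prefix W S \<longleftrightarrow>
     all_sig S \<and> (\<exists>T. W \<approx> S @ T) \<and>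
     (\<forall>S' T'. all_sig S' \<longrightarrow> W \<approx> S' @ T' \<longrightarrow> length S' \<le> length S)"

lemma max_sigma_prefix_Cons_tail:
  assumes max: "max_sigma_prefix W S" and S: "S \<approx> s # S'"
    and W: "W \<approx> s # W'" and W': "W' \<approx> S' @ T"
  shows "max_sigma_prefix W' S'"
  unfolding max_sigma_prefix_def
proof (intro conjI allI impI)
  have "all_sig (s # S')" using max word_equiv_all_sig[OF S] by (simp add: max_sigma_prefix_def)
  then have s: "is_sig s" and "all_sig S'" by simp_all
  then show "all_sig S'" by simp
  show "\<exists>T. W' \<approx> S' @ T" using W' by blast
  fix S'' T'' assume "all_sig S''" and "W' \<approx> S'' @ T''"
  with s have "all_sig (s # S'')" and "W \<approx> (s # S'') @ T''"
    using word_equiv_trans[OF W word_equiv_Cons] by simp_all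
  then have "length (s # S'') \<le> length S" using max unfolding max_sigma_prefix_def by blast
  then show "length S'' \<le> length S'" using word_equiv_length[OF S] by simp
qed

lemma max_sigma_prefix_Cons:
  assumes shorter: "\<And>W' S' A V. length W' < length W \<Longrightarrow> max_sigma_prefix W' S' \<Longrightarrow> all_sig A \<Longrightarrow>
      W' \<approx> A @ V \<Longrightarrow> \<exists>U. S' \<approx> A @ U"
    and max: "max_sigma_prefix W S" and a: "is_sig a" and WA: "W \<approx> a # W'"
  obtains S1 where "S \<approx> a # S1" and "max_sigma_prefix W' S1"
proof -
  have "all_sig [a]" "W \<approx> [a] @ W'" using a WA by simp_all
  then have "length [a] \<le> length S" using max unfolding max_sigma_prefix_def by blast
  then obtain s S' where S: "S = s # S'" by (cases S) auto
  with max obtain T where WS: "W \<approx> s # S' @ T" and s: "is_sig s"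
    unfolding max_sigma_prefix_def by auto
  have factors: "factors_through_complement a W' s (S' @ T)"
    using word_equiv_Cons_factors_through_complement word_equiv_trans[OF word_equiv_sym[OF WA] WS]
    by simp
  show ?thesis
  proof (cases "a = s")
    case True
    with factors have "W' \<approx> S' @ T" by (simp add: factors_through_complement_same)
    with S True show ?thesis
      using that max_sigma_prefix_Cons_tail[OF max _ WA] by blast
  next
    case False
    with factors obtain p q Z where c: "complement a s = Some (p, q)" and ST: "S' @ T \<approx> q @ Z"
      by (auto simp: factors_through_complement_distinct)
    have "max_sigma_prefix (S' @ T) S'"
      using max_sigma_prefix_Cons_tail[OF max _ WS] S by blast
    moreover have "length (S' @ T) < length W" using word_equiv_length[OF WS] by simp
    moreover have "all_sig q" using complement_all_sig[OF c a s] by simp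
    ultimately obtain U where "S' \<approx> q @ U" using shorter ST by blast
    then have SU: "S \<approx> a # p @ U"
      using S word_equiv_trans[OF word_equiv_Cons word_equiv_complement[OF complement_swap[OF c]]]
      by simp
    have "a # W' \<approx> W" using word_equiv_sym[OF WA] .
    also have "\<dots> \<approx> S @ T" using WS S by simp
    also have "\<dots> \<approx> a # p @ U @ T" using word_equiv_append_right[OF SU] by simp
    finally have "a # W' \<approx> a # p @ U @ T" .
    then have "W' \<approx> (p @ U) @ T" using word_equiv_Cons_cancel by simp
    with SU show ?thesis
      using that max_sigma_prefix_Cons_tail[OF max SU WA] by simp
  qed
qed

lemma max_sigma_prefix_left_divisible:
  "max_sigma_prefix W S \<Longrightarrow> all_sig A \<Longrightarrow> W \<approx> A @ V \<Longrightarrow> \<exists>U. S \<approx> A @ U"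
proof (induction "length W" arbitrary: W S A V rule: less_induct)
  case less
  show ?case
  proof (cases A)
    case Nil
    then show ?thesis by auto
  next
    case (Cons a A')
    with less.prems have a: "is_sig a" "all_sig A'" and WA: "W \<approx> a # A' @ V" by simp_all
    then obtain S1 where S1: "S \<approx> a # S1" "max_sigma_prefix (A' @ V) S1"
      using max_sigma_prefix_Cons[OF _ less.prems(1)] less.hyps by blast
    moreover have "length (A' @ V) < length W" using word_equiv_length[OF WA] by simp
    ultimately obtain U where "S1 \<approx> A' @ U" using less.hyps a(2) by blast
    with Cons show ?thesis using word_equiv_trans[OF S1(1) word_equiv_Cons] by auto
  qed
qed

lemma sigma_prefix_left_divisible:
  assumes W: "pos_word n W" and S: "sigma_word n S" and WS: "sb_eq n W (S @ T)"
    and longest: "\<And>S' T'. sigma_word n S' \<Longrightarrow> pos_word n T' \<Longrightarrow> sb_eq n W (S' @ T') \<Longrightarrow>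
      length S' \<le> length S"
    and A: "sigma_word n A" and WA: "sb_eq n W (A @ V)"
  shows "\<exists>U. pos_word n U \<and> sb_eq n S (A @ U)"
proof -
  have "max_sigma_prefix W S"
    unfolding max_sigma_prefix_def
  proof (intro conjI allI impI)
    show "all_sig S" using S by (simp add: sigma_word_iff)
    show "\<exists>T. W \<approx> S @ T" using sb_eq_imp_word_equiv[OF WS] by blast
    fix S' T' assume "all_sig S'" and WS': "W \<approx> S' @ T'"
    moreover have "pos_word n (S' @ T')" using word_equiv_pos_word[OF WS' W] .
    moreover have "sb_eq n W (S' @ T')" using word_equiv_imp_sb_eq[OF WS' W] .
    ultimately show "length S' \<le> length S"
      using longest[of S' T'] by (simp add: sigma_word_iff)
  qed
  moreover have "all_sig A" using A by (simp add: sigma_word_iff)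
  ultimately obtain U where SU: "S \<approx> A @ U"
    using max_sigma_prefix_left_divisible sb_eq_imp_word_equiv[OF WA] by blast
  have "pos_word n S" using S by (simp add: sigma_word_iff)
  then have "pos_word n U" and "sb_eq n S (A @ U)"
    using word_equiv_pos_word[OF SU] word_equiv_imp_sb_eq[OF SU] by simp_all
  then show ?thesis by blast
qed

theorem proposition2p2:
  fixes n :: nat and W :: word
  assumes "n \<ge> 2" and "pos_word n W"
  shows
  "(\<forall>S A V.
      sigma_word n S
    \<and> (\<exists>T. pos_word n T \<and> sb_eq n W (S @ T))
    \<and> (\<forall>S' T'. sigma_word n S' \<and> pos_word n T' \<and> sb_eq n W (S' @ T') \<longrightarrow> length S' \<le> length S)
    \<and> sigma_word n A \<and> pos_word n V \<and> sb_eq n W (A @ V)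
    \<longrightarrow> (\<exists>U. pos_word n U \<and> sb_eq n S (A @ U)))
 \<and> (\<forall>S A V.
      sigma_word n S
    \<and> (\<exists>T. pos_word n T \<and> sb_eq n W (T @ S))
    \<and> (\<forall>S' T'. sigma_word n S' \<and> pos_word n T' \<and> sb_eq n W (T' @ S') \<longrightarrow> length S' \<le> length S)
    \<and> sigma_word n A \<and> pos_word n V \<and> sb_eq n W (V @ A)
    \<longrightarrow> (\<exists>U. pos_word n U \<and> sb_eq n S (U @ A)))"
proof (intro conjI allI impI; elim conjE exE)
  fix S A V T
  assume "sigma_word n S" "sb_eq n W (S @ T)"
    "\<forall>S' T'. sigma_word n S' \<and> pos_word n T' \<and> sb_eq n W (S' @ T') \<longrightarrow> length S' \<le> length S"
    "sigma_word n A" "sb_eq n W (A @ V)"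
  then show "\<exists>U. pos_word n U \<and> sb_eq n S (A @ U)"
    using sigma_prefix_left_divisible[OF assms(2)] by blast
next
  fix S A V T
  assume S: "sigma_word n S" and WS: "sb_eq n W (T @ S)"
    and longest: "\<forall>S' T'. sigma_word n S' \<and> pos_word n T' \<and> sb_eq n W (T' @ S') \<longrightarrow> length S' \<le> length S"
    and A: "sigma_word n A" and WA: "sb_eq n W (V @ A)"
  have rev_W: "pos_word n (rev W)" using assms(2) by simp
  have "\<exists>U. pos_word n U \<and> sb_eq n (rev S) (rev A @ U)"
  proof (rule sigma_prefix_left_divisible[of n "rev W" "rev S" "rev T" "rev A" "rev V"])
    show "sb_eq n (rev W) (rev S @ rev T)" using sb_eq_rev[OF assms(2) WS] by simp
    show "sb_eq n (rev W) (rev A @ rev V)" using sb_eq_rev[OF assms(2) WA] by simp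
    fix S' T' assume "sigma_word n S'" "pos_word n T'" and "sb_eq n (rev W) (S' @ T')"
    moreover from this have "sb_eq n W (rev T' @ rev S')" using sb_eq_rev[OF rev_W] by fastforce
    ultimately show "length S' \<le> length (rev S)"
      using longest[rule_format, of "rev S'" "rev T'"] by (simp add: sigma_word_iff)
  qed (use S A rev_W in \<open>simp_all add: sigma_word_iff\<close>)
  then obtain U where U: "pos_word n U" and "sb_eq n (rev S) (rev A @ U)" by blast
  moreover have "pos_word n (rev S)" using S by (simp add: sigma_word_iff)
  ultimately have "sb_eq n S (rev U @ A)" using sb_eq_rev by fastforce
  with U show "\<exists>U. pos_word n U \<and> sb_eq n S (U @ A)"
    using pos_word_rev by blast
qed

end
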